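(* Let $m\in\mathbb{N}$, let $G^1,\dots,G^m$ be compatible nontrivial monotonic hypergraph sequences, and let $1\le t<m$. Then for all $p,q\in\mathbb{R}_{>0}$, $$\mathrm{cr}((G^1,\dots,G^m),p+q)\le\max\big(\mathrm{cr}((G^1,\dots,G^t),p),\ \mathrm{cr}((G^{t+1},\dots,G^m),q)\big).$$
   Context: A finite hypergraph $G=(V,E)$ has finite vertex set $V$ and hyperedge set $E\subseteq\mathcal P(V)$. A sequence $(G_n)_{n\in\mathbb{N}}$ of finite hypergraphs is nontrivial monotonic if $V(G_n)\subseteq V(G_{n+1})$, $E(G_n)\subseteq E(G_{n+1})$ for all $n$, $V(G_1)\ne\emptyset$ and $\emptyset\notin E(G_n)$ for all $n$. Sequences $G^1,\dots,G^m$ are compatible if $V(G^1_n)=\dots=V(G^m_n)$ for all $n$. A set $S$ of vertices is independent in a hypergraph if it contains no hyperedge. For compatible sequences $G^1,\dots,G^r$ and $q\in\mathbb{R}_{>0}$, $\mathrm{cr}((G^1,\dots,G^r),q)\in\mathbb{N}\cup\{+\infty\}$ is the infimum of all $n\in\mathbb{N}$ such that for all $n'\ge n$ and all $r$-tuples $(S_1,\dots,S_r)$ of pairwise disjoint sets with $S_i$ independent in $G^i_{n'}$ we have $\frac{|S_1|+\dots+|S_r|}{|V(G^1_{n'})|}<q$ (infimum of the empty set is $+\infty$). *)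

theory Defs
  imports Complex_Main "HOL-Library.Extended_Nat"
begin

record 'a hypergraph =
  verts :: "'a set"
  hedges :: "'a set set"

definition finite_hypergraph :: "('a, 'b) hypergraph_scheme \<Rightarrow> bool" where
  "finite_hypergraph G \<longleftrightarrow> finite (verts G) \<and> hedges G \<subseteq> Pow (verts G)"

text \<open>Sequences are indexed by the positive naturals 1,2,3,...; values at index 0 are ignored.\<close>
type_synonym 'a hgseq = "nat \<Rightarrow> 'a hypergraph"

definition nontrivial_monotonic :: "'a hgseq \<Rightarrow> bool" where
  "nontrivial_monotonic G \<longleftrightarrow>
     (\<forall>n\<ge>1. finite_hypergraph (G n)) \<and>
     (\<forall>n\<ge>1. verts (G n) \<subseteq> verts (G (Suc n)) \<and> hedges (G n) \<subseteq> hedges (G (Suc n))) \<and>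
     verts (G 1) \<noteq> {} \<and>
     (\<forall>n\<ge>1. {} \<notin> hedges (G n))"

definition compatible :: "'a hgseq list \<Rightarrow> bool" where
  "compatible Gs \<longleftrightarrow> (\<forall>i<length Gs. \<forall>j<length Gs. \<forall>n\<ge>1. verts ((Gs!i) n) = verts ((Gs!j) n))"

definition independent :: "'a hypergraph \<Rightarrow> 'a set \<Rightarrow> bool" where
  "independent G S \<longleftrightarrow> S \<subseteq> verts G \<and> (\<forall>e\<in>hedges G. \<not> e \<subseteq> S)"

definition cr_good :: "'a hgseq list \<Rightarrow> real \<Rightarrow> nat \<Rightarrow> bool" where
  "cr_good Gs q n \<longleftrightarrow>
     (\<forall>n'\<ge>n. \<forall>S :: nat \<Rightarrow> 'a set.
        ((\<forall>i<length Gs. independent ((Gs!i) n') (S i)) \<and>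
         (\<forall>i<length Gs. \<forall>j<length Gs. i \<noteq> j \<longrightarrow> S i \<inter> S j = {}))
        \<longrightarrow> (\<Sum>i<length Gs. real (card (S i))) / real (card (verts ((hd Gs) n'))) < q)"

definition cr :: "'a hgseq list \<Rightarrow> real \<Rightarrow> enat" where
  "cr Gs q = (if \<exists>n\<ge>1. cr_good Gs q n
              then enat (LEAST n. n \<ge> 1 \<and> cr_good Gs q n) else \<infinity>)"

end

theory Submission
  imports Defs
begin

text \<open>A disjoint tuple of independent sets for all \<open>m\<close> sequences splits into one for the first
  \<open>t\<close> sequences and one for the remaining ones. By compatibility all sequences share their vertex
  sets, so the two densities have the same denominator and add up; beyond both thresholds they are
  below \<open>p\<close> and \<open>q\<close> respectively.\<close>

lemma sum_lessThan_add:
  fixes f :: "nat \<Rightarrow> 'a::comm_monoid_add"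
  shows "(\<Sum>i<m + n. f i) = (\<Sum>i<m. f i) + (\<Sum>i<n. f (m + i))"
  by (induction n) (simp_all add: add.assoc)

lemma compatible_verts_hd:
  assumes "compatible Gs" "i < length Gs" "1 \<le> n"
  shows "verts ((Gs!i) n) = verts ((hd Gs) n)"
proof -
  have "hd Gs = Gs!0"
    using assms(2) by (cases Gs) auto
  moreover have "verts ((Gs!i) n) = verts ((Gs!0) n)"
    using assms gr_implies_not0 unfolding compatible_def by blast
  ultimately show ?thesis
    by simp
qed

lemma cr_goodD:
  assumes "cr_good Gs q n" "n \<le> n'"
    and "\<forall>i<length Gs. independent ((Gs!i) n') (S i)"
    and "\<forall>i<length Gs. \<forall>j<length Gs. i \<noteq> j \<longrightarrow> S i \<inter> S j = {}"
  shows "(\<Sum>i<length Gs. real (card (S i))) / real (card (verts ((hd Gs) n'))) < q"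
  using assms unfolding cr_good_def by blast

lemma cr_good_append:
  assumes comp: "compatible (As @ Bs)" and "As \<noteq> []" "Bs \<noteq> []"
    and good_As: "cr_good As p n\<^sub>1" and good_Bs: "cr_good Bs q n\<^sub>2"
    and "1 \<le> max n\<^sub>1 n\<^sub>2"
  shows "cr_good (As @ Bs) (p + q) (max n\<^sub>1 n\<^sub>2)"
  unfolding cr_good_def
proof (intro allI impI, elim conjE)
  fix n' and S :: "nat \<Rightarrow> 'a set"
  assume n': "max n\<^sub>1 n\<^sub>2 \<le> n'"
    and indep: "\<forall>i<length (As @ Bs). independent (((As @ Bs)!i) n') (S i)"
    and disj: "\<forall>i<length (As @ Bs). \<forall>j<length (As @ Bs). i \<noteq> j \<longrightarrow> S i \<inter> S j = {}"
  let ?a = "length As"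
  let ?c = "real (card (verts ((hd As) n')))"
  have "verts ((hd Bs) n') = verts (((As @ Bs)!?a) n')"
    using \<open>Bs \<noteq> []\<close> by (simp add: hd_conv_nth nth_append)
  also have "\<dots> = verts ((hd (As @ Bs)) n')"
    using \<open>Bs \<noteq> []\<close> \<open>1 \<le> max n\<^sub>1 n\<^sub>2\<close> n'
    by (intro compatible_verts_hd[OF comp]) auto
  finally have verts_hd_Bs: "verts ((hd Bs) n') = verts ((hd As) n')"
    using \<open>As \<noteq> []\<close> by simp
  have indep_As: "\<forall>i<?a. independent ((As!i) n') (S i)"
    using indep by (metis length_append nth_append trans_less_add1)
  have disj_As: "\<forall>i<?a. \<forall>j<?a. i \<noteq> j \<longrightarrow> S i \<inter> S j = {}"
    using disj by simp
  have indep_Bs: "\<forall>i<length Bs. independent ((Bs!i) n') (S (?a + i))"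
    using indep by (metis length_append nat_add_left_cancel_less nth_append_length_plus)
  have disj_Bs: "\<forall>i<length Bs. \<forall>j<length Bs. i \<noteq> j \<longrightarrow> S (?a + i) \<inter> S (?a + j) = {}"
    using disj by simp
  have "(\<Sum>i<?a. real (card (S i))) / ?c < p"
    using cr_goodD[OF good_As _ indep_As disj_As] n' by simp
  moreover have "(\<Sum>i<length Bs. real (card (S (?a + i)))) / ?c < q"
    using cr_goodD[OF good_Bs _ indep_Bs disj_Bs] n' verts_hd_Bs by simp
  ultimately show "(\<Sum>i<length (As @ Bs). real (card (S i))) / real (card (verts ((hd (As @ Bs)) n')))
      < p + q"
    using \<open>As \<noteq> []\<close> by (simp add: sum_lessThan_add add_divide_distrib)
qed

lemma cr_le_enat:
  assumes "cr_good Gs q n" "1 \<le> n"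
  shows "cr Gs q \<le> enat n"
proof -
  have "(LEAST n. 1 \<le> n \<and> cr_good Gs q n) \<le> n"
    using assms by (intro Least_le) simp
  then show ?thesis
    using assms unfolding cr_def by auto
qed

lemma cr_eq_enatD:
  assumes "cr Gs q = enat n"
  shows "1 \<le> n \<and> cr_good Gs q n"
proof -
  have ex: "\<exists>n. 1 \<le> n \<and> cr_good Gs q n" and n: "n = (LEAST n. 1 \<le> n \<and> cr_good Gs q n)"
    using assms unfolding cr_def by (auto split: if_splits)
  show ?thesis
    unfolding n by (rule LeastI_ex[OF ex])
qed

theorem lemma3:
  fixes Gs :: "'a hgseq list" and t :: nat and p q :: real
  assumes "\<forall>i<length Gs. nontrivial_monotonic (Gs!i)"
    and "compatible Gs"
    and "1 \<le> t" and "t < length Gs"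
    and "p > 0" and "q > 0"
  shows "cr Gs (p + q) \<le> max (cr (take t Gs) p) (cr (drop t Gs) q)"
proof (cases "cr (take t Gs) p = \<infinity> \<or> cr (drop t Gs) q = \<infinity>")
  case True
  then show ?thesis by auto
next
  case False
  then obtain n\<^sub>1 n\<^sub>2 where n\<^sub>1: "cr (take t Gs) p = enat n\<^sub>1" and n\<^sub>2: "cr (drop t Gs) q = enat n\<^sub>2"
    by auto
  have "cr_good (take t Gs @ drop t Gs) (p + q) (max n\<^sub>1 n\<^sub>2)"
    using assms(2-4) cr_eq_enatD[OF n\<^sub>1] cr_eq_enatD[OF n\<^sub>2]
    by (intro cr_good_append) auto
  then have "cr Gs (p + q) \<le> enat (max n\<^sub>1 n\<^sub>2)"
    using cr_eq_enatD[OF n\<^sub>1] by (intro cr_le_enat) auto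
  then show ?thesis
    using n\<^sub>1 n\<^sub>2 by simp
qed

end
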